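(* Let $Q$ be a quiver with no oriented cycles, $\theta\in\mathbb{Z}^{Q_0}$ a weight with $\nabla(Q,\theta)\ne\emptyset$, and $a\in Q_1$ an arrow such that the quiver $\hat Q$ obtained by contracting $a$ has no oriented cycles. Then for all sufficiently large integers $d$ the arrow $a$ is contractable for the pair $(Q,\theta+d(\varepsilon_{a^+}-\varepsilon_{a^-}))$, where $\varepsilon_v\in\mathbb{Z}^{Q_0}$ is the characteristic function of the vertex $v$.
   Context: A quiver $Q$: vertices $Q_0$, arrows $Q_1$, $a$ from $a^-$ to $a^+$. $\nabla(Q,\theta)=\{x\in\mathbb{R}_{\ge0}^{Q_1}\mid\forall v:\ \theta(v)=\sum_{a^+=v}x(a)-\sum_{a^-=v}x(a)\}$. Contracting a non-loop arrow $a$ of $(Q,\psi)$ gives $(\hat Q,\hat\psi)$: delete $a$, glue $a^-$ and $a^+$ to one vertex $v$, $\hat\psi(v)=\psi(a^-)+\psi(a^+)$, $\hat\psi=\psi$ elsewhere. The arrow $a$ is contractable for $(Q,\psi)$ if $\nabla(Q,\psi)$ and $\nabla(\hat Q,\hat\psi)$ are integral-affinely equivalent: there is an affine isomorphism between their affine spans mapping lattice points of one span (lattices $\mathbb{Z}^{Q_1}$, $\mathbb{Z}^{\hat Q_1}$) onto lattice points of the other and one polyhedron onto the other. *)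

theory Defs
  imports "HOL-Analysis.Analysis"
begin

text \<open>A quiver is given by a vertex set V, an arrow set E and source/target maps
  (a^- = src a, a^+ = tgt a). Real vectors indexed by the arrows are functions
  'e => real that vanish outside the arrow set.\<close>

definition quiver :: "'v set \<Rightarrow> 'e set \<Rightarrow> ('e \<Rightarrow> 'v) \<Rightarrow> ('e \<Rightarrow> 'v) \<Rightarrow> bool" where
  "quiver V E src tgt \<longleftrightarrow> finite V \<and> finite E \<and> (\<forall>a\<in>E. src a \<in> V \<and> tgt a \<in> V)"

definition acyclic_quiver :: "'e set \<Rightarrow> ('e \<Rightarrow> 'v) \<Rightarrow> ('e \<Rightarrow> 'v) \<Rightarrow> bool" where
  "acyclic_quiver E src tgt \<longleftrightarrow> (\<forall>v. (v, v) \<notin> {(src a, tgt a) | a. a \<in> E}\<^sup>+)"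

definition flow_polytope ::
  "'v set \<Rightarrow> 'e set \<Rightarrow> ('e \<Rightarrow> 'v) \<Rightarrow> ('e \<Rightarrow> 'v) \<Rightarrow> ('v \<Rightarrow> int) \<Rightarrow> ('e \<Rightarrow> real) set" where
  "flow_polytope V E src tgt \<theta> =
     {x. (\<forall>a\<in>E. 0 \<le> x a) \<and> (\<forall>a. a \<notin> E \<longrightarrow> x a = 0) \<and>
         (\<forall>v\<in>V. real_of_int (\<theta> v) =
                  (\<Sum>a\<in>{a\<in>E. tgt a = v}. x a) - (\<Sum>a\<in>{a\<in>E. src a = v}. x a))}"

text \<open>Contraction of a (non-loop) arrow a: delete a and glue tgt a onto src a.\<close>
definition glue :: "('e \<Rightarrow> 'v) \<Rightarrow> ('e \<Rightarrow> 'v) \<Rightarrow> 'e \<Rightarrow> 'v \<Rightarrow> 'v" where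
  "glue src tgt a w = (if w = tgt a then src a else w)"

definition contr_V :: "'v set \<Rightarrow> ('e \<Rightarrow> 'v) \<Rightarrow> ('e \<Rightarrow> 'v) \<Rightarrow> 'e \<Rightarrow> 'v set" where
  "contr_V V src tgt a = V - {tgt a}"

definition contr_E :: "'e set \<Rightarrow> 'e \<Rightarrow> 'e set" where
  "contr_E E a = E - {a}"

definition contr_src :: "('e \<Rightarrow> 'v) \<Rightarrow> ('e \<Rightarrow> 'v) \<Rightarrow> 'e \<Rightarrow> 'e \<Rightarrow> 'v" where
  "contr_src src tgt a = glue src tgt a \<circ> src"

definition contr_tgt :: "('e \<Rightarrow> 'v) \<Rightarrow> ('e \<Rightarrow> 'v) \<Rightarrow> 'e \<Rightarrow> 'e \<Rightarrow> 'v" where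
  "contr_tgt src tgt a = glue src tgt a \<circ> tgt"

definition contr_weight :: "('e \<Rightarrow> 'v) \<Rightarrow> ('e \<Rightarrow> 'v) \<Rightarrow> 'e \<Rightarrow> ('v \<Rightarrow> int) \<Rightarrow> 'v \<Rightarrow> int" where
  "contr_weight src tgt a \<psi> w = (if w = src a then \<psi> (src a) + \<psi> (tgt a) else \<psi> w)"

definition aff_span :: "('e \<Rightarrow> real) set \<Rightarrow> ('e \<Rightarrow> real) set" where
  "aff_span P = {y. \<exists>S u. finite S \<and> S \<noteq> {} \<and> S \<subseteq> P \<and> sum u S = 1 \<and>
                        y = (\<lambda>i. \<Sum>x\<in>S. u x * x i)}"

definition affine_on :: "('e \<Rightarrow> real) set \<Rightarrow> (('e \<Rightarrow> real) \<Rightarrow> ('f \<Rightarrow> real)) \<Rightarrow> bool" where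
  "affine_on A \<phi> \<longleftrightarrow> (\<forall>x\<in>A. \<forall>y\<in>A. \<forall>t::real.
      \<phi> (\<lambda>i. (1 - t) * x i + t * y i) = (\<lambda>j. (1 - t) * \<phi> x j + t * \<phi> y j))"

definition lattice_pts :: "('e \<Rightarrow> real) set \<Rightarrow> ('e \<Rightarrow> real) set" where
  "lattice_pts A = {x\<in>A. \<forall>i. x i \<in> \<int>}"

definition int_aff_equiv :: "('e \<Rightarrow> real) set \<Rightarrow> ('f \<Rightarrow> real) set \<Rightarrow> bool" where
  "int_aff_equiv P P' \<longleftrightarrow> (\<exists>\<phi>. bij_betw \<phi> (aff_span P) (aff_span P') \<and>
      affine_on (aff_span P) \<phi> \<and>
      \<phi> ` lattice_pts (aff_span P) = lattice_pts (aff_span P') \<and>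
      \<phi> ` P = P')"

definition contractable ::
  "'v set \<Rightarrow> 'e set \<Rightarrow> ('e \<Rightarrow> 'v) \<Rightarrow> ('e \<Rightarrow> 'v) \<Rightarrow> ('v \<Rightarrow> int) \<Rightarrow> 'e \<Rightarrow> bool" where
  "contractable V E src tgt \<psi> a \<longleftrightarrow>
     int_aff_equiv (flow_polytope V E src tgt \<psi>)
       (flow_polytope (contr_V V src tgt a) (contr_E E a) (contr_src src tgt a)
          (contr_tgt src tgt a) (contr_weight src tgt a \<psi>))"

definition char_vec :: "'v \<Rightarrow> 'v \<Rightarrow> int" where
  "char_vec v w = (if w = v then 1 else 0)"

end

theory Submission
  imports Defs
begin

text \<open>Forgetting the coordinate of the arrow a maps the flow polytope of (Q, psi) affinely and
  integrally into that of the contracted quiver; the inverse reinstates x(a) as the value forced by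
  conservation at tgt a, and this is an inverse on the polytopes exactly when that value is
  nonnegative. For psi = theta + d (e_(tgt a) - e_(src a)) the contracted weight does not depend on
  d, and since the contracted quiver is acyclic its flows have bounded total mass (weigh the
  conservation laws with a potential that increases along every arrow). Hence the forced value,
  psi(tgt a) = theta(tgt a) + d minus a bounded inflow, is nonnegative for all large d.\<close>

definition preserves_affine_combinations :: "(('e \<Rightarrow> real) \<Rightarrow> ('f \<Rightarrow> real)) \<Rightarrow> bool" where
  "preserves_affine_combinations g \<longleftrightarrow>
     (\<forall>(S :: ('e \<Rightarrow> real) set) u p. finite S \<longrightarrow> sum u S = 1 \<longrightarrow>
        g (\<lambda>i. \<Sum>s\<in>S. u s * p s i) = (\<lambda>j. \<Sum>s\<in>S. u s * g (p s) j))"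

lemma preserves_affine_combinationsD:
  fixes g :: "('e \<Rightarrow> real) \<Rightarrow> 'f \<Rightarrow> real" and S :: "('e \<Rightarrow> real) set"
  assumes "preserves_affine_combinations g" "finite S" "sum u S = 1"
  shows "g (\<lambda>i. \<Sum>s\<in>S. u s * p s i) = (\<lambda>j. \<Sum>s\<in>S. u s * g (p s) j)"
  using assms(1)[unfolded preserves_affine_combinations_def, rule_format, OF assms(2,3)] .

lemma preserves_affine_combinations_comp:
  fixes f :: "('e \<Rightarrow> real) \<Rightarrow> 'e \<Rightarrow> real" and g :: "('e \<Rightarrow> real) \<Rightarrow> 'f \<Rightarrow> real"
  assumes "preserves_affine_combinations f" "preserves_affine_combinations g"
  shows "preserves_affine_combinations (g \<circ> f)"
  unfolding preserves_affine_combinations_def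
proof (intro allI impI)
  fix S :: "('e \<Rightarrow> real) set" and u :: "('e \<Rightarrow> real) \<Rightarrow> real" and p :: "('e \<Rightarrow> real) \<Rightarrow> 'e \<Rightarrow> real"
  assume S: "finite S" "sum u S = 1"
  have "f (\<lambda>i. \<Sum>s\<in>S. u s * p s i) = (\<lambda>j. \<Sum>s\<in>S. u s * f (p s) j)"
    by (rule preserves_affine_combinationsD[OF assms(1) S])
  moreover have "g (\<lambda>j. \<Sum>s\<in>S. u s * f (p s) j) = (\<lambda>k. \<Sum>s\<in>S. u s * g (f (p s)) k)"
    by (rule preserves_affine_combinationsD[OF assms(2) S])
  ultimately show "(g \<circ> f) (\<lambda>i. \<Sum>s\<in>S. u s * p s i) = (\<lambda>k. \<Sum>s\<in>S. u s * (g \<circ> f) (p s) k)"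
    by simp
qed

lemma preserves_affine_combinations_affine_on:
  fixes g :: "('e \<Rightarrow> real) \<Rightarrow> 'f \<Rightarrow> real"
  assumes "preserves_affine_combinations g"
  shows "affine_on A g"
  unfolding affine_on_def
proof (intro ballI allI)
  fix x y :: "'e \<Rightarrow> real" and t :: real
  \<comment> \<open>the index type is the point type, so index x and y by two distinct constant functions\<close>
  define p where "p s = (if s = (\<lambda>_. 0) then x else y)" for s :: "'e \<Rightarrow> real"
  define u where "u s = (if s = (\<lambda>_. 0) then 1 - t else t)" for s :: "'e \<Rightarrow> real"
  have ne: "(\<lambda>_::'e. 0::real) \<noteq> (\<lambda>_. 1)" by (simp add: fun_eq_iff)
  have "sum u {\<lambda>_. 0, \<lambda>_. 1} = 1" using ne by (simp add: u_def)
  then have "g (\<lambda>i. \<Sum>s\<in>{\<lambda>_. 0, \<lambda>_. 1}. u s * p s i) = (\<lambda>j. \<Sum>s\<in>{\<lambda>_. 0, \<lambda>_. 1}. u s * g (p s) j)"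
    by (intro preserves_affine_combinationsD[OF assms]) simp_all
  then show "g (\<lambda>i. (1 - t) * x i + t * y i) = (\<lambda>j. (1 - t) * g x j + t * g y j)"
    using ne by (simp add: u_def p_def)
qed

lemma image_aff_span_subset:
  fixes g :: "('e \<Rightarrow> real) \<Rightarrow> 'f \<Rightarrow> real"
  assumes "preserves_affine_combinations g"
  shows "g ` aff_span P \<subseteq> aff_span (g ` P)"
proof
  fix z assume "z \<in> g ` aff_span P"
  then obtain S u where S: "finite S" "S \<noteq> {}" "S \<subseteq> P" "sum u S = 1"
    and z: "z = g (\<lambda>i. \<Sum>x\<in>S. u x * x i)"
    by (auto simp: aff_span_def)
  define u' where "u' y = sum u {x\<in>S. g x = y}" for y
  have "sum u' (g ` S) = 1"
    using S by (simp add: u'_def sum.image_gen[symmetric])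
  moreover have "(\<lambda>j. \<Sum>y\<in>g ` S. u' y * y j) = z"
  proof -
    have "(\<Sum>y\<in>g ` S. u' y * y j) = (\<Sum>x\<in>S. u x * g x j)" for j
    proof -
      have "(\<Sum>y\<in>g ` S. u' y * y j) = (\<Sum>y\<in>g ` S. \<Sum>x\<in>{x\<in>S. g x = y}. u x * g x j)"
        unfolding u'_def sum_distrib_right by (intro sum.cong refl) auto
      also have "\<dots> = (\<Sum>x\<in>S. u x * g x j)"
        by (rule sum.image_gen[symmetric, OF S(1)])
      finally show ?thesis .
    qed
    then show ?thesis
      using z preserves_affine_combinationsD[OF assms S(1,4), of id] by simp
  qed
  ultimately show "z \<in> aff_span (g ` P)"
    unfolding aff_span_def using S by blast
qed

lemma preserves_affine_combinations_fix_aff_span: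
  fixes g :: "('e \<Rightarrow> real) \<Rightarrow> 'e \<Rightarrow> real"
  assumes "preserves_affine_combinations g" "\<And>z. z \<in> P \<Longrightarrow> g z = z" "x \<in> aff_span P"
  shows "g x = x"
proof -
  obtain S u where S: "finite S" "S \<subseteq> P" "sum u S = 1" and x: "x = (\<lambda>i. \<Sum>z\<in>S. u z * z i)"
    using assms(3) by (auto simp: aff_span_def)
  have "g x = (\<lambda>j. \<Sum>z\<in>S. u z * g z j)"
    using preserves_affine_combinationsD[OF assms(1) S(1,3), of id] x by simp
  also have "\<dots> = x"
    unfolding x using assms(2) S(2) by (intro ext sum.cong) auto
  finally show ?thesis .
qed

lemma int_aff_equivI:
  fixes \<phi> \<iota> :: "('e \<Rightarrow> real) \<Rightarrow> 'e \<Rightarrow> real"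
  assumes aff: "preserves_affine_combinations \<phi>" "preserves_affine_combinations \<iota>"
    and image: "\<phi> ` P = P'"
    and inverse: "\<And>x. x \<in> P \<Longrightarrow> \<iota> (\<phi> x) = x" "\<And>y. y \<in> P' \<Longrightarrow> \<phi> (\<iota> y) = y"
    and integral: "\<And>x j. (\<And>i. x i \<in> \<int>) \<Longrightarrow> \<phi> x j \<in> \<int>" "\<And>y j. (\<And>i. y i \<in> \<int>) \<Longrightarrow> \<iota> y j \<in> \<int>"
  shows "int_aff_equiv P P'"
proof -
  have "\<iota> ` P' = P"
    using image inverse(1) by force
  then have span_maps: "\<phi> ` aff_span P \<subseteq> aff_span P'" "\<iota> ` aff_span P' \<subseteq> aff_span P"
    using image_aff_span_subset[OF aff(1), of P] image_aff_span_subset[OF aff(2), of P'] image by auto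
  have span_inverse: "\<iota> (\<phi> x) = x" if "x \<in> aff_span P" for x
    using preserves_affine_combinations_fix_aff_span[OF preserves_affine_combinations_comp[OF aff] _ that]
      inverse(1) by simp
  have span_inverse': "\<phi> (\<iota> y) = y" if "y \<in> aff_span P'" for y
    using preserves_affine_combinations_fix_aff_span[OF preserves_affine_combinations_comp[OF aff(2,1)] _ that]
      inverse(2) by simp
  have "bij_betw \<phi> (aff_span P) (aff_span P')"
    using span_maps span_inverse span_inverse' by (intro bij_betw_byWitness[of _ \<iota>]) auto
  moreover have "\<phi> ` lattice_pts (aff_span P) = lattice_pts (aff_span P')"
  proof
    show "\<phi> ` lattice_pts (aff_span P) \<subseteq> lattice_pts (aff_span P')"
      using span_maps(1) integral(1) by (auto simp: lattice_pts_def)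
    show "lattice_pts (aff_span P') \<subseteq> \<phi> ` lattice_pts (aff_span P)"
    proof
      fix y assume "y \<in> lattice_pts (aff_span P')"
      then have "y \<in> aff_span P'" "\<iota> y \<in> lattice_pts (aff_span P)"
        using span_maps(2) integral(2) by (auto simp: lattice_pts_def)
      then show "y \<in> \<phi> ` lattice_pts (aff_span P)"
        using span_inverse' by (metis image_eqI)
    qed
  qed
  ultimately show ?thesis
    using image preserves_affine_combinations_affine_on[OF aff(1)] unfolding int_aff_equiv_def by blast
qed

definition net_inflow :: "'e set \<Rightarrow> ('e \<Rightarrow> 'v) \<Rightarrow> ('e \<Rightarrow> 'v) \<Rightarrow> 'v \<Rightarrow> ('e \<Rightarrow> real) \<Rightarrow> real" where
  "net_inflow E src tgt v x = (\<Sum>b\<in>{b\<in>E. tgt b = v}. x b) - (\<Sum>b\<in>{b\<in>E. src b = v}. x b)"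

lemma flow_polytope_iff:
  "x \<in> flow_polytope V E src tgt \<theta> \<longleftrightarrow>
     (\<forall>b\<in>E. 0 \<le> x b) \<and> (\<forall>b. b \<notin> E \<longrightarrow> x b = 0) \<and>
     (\<forall>v\<in>V. real_of_int (\<theta> v) = net_inflow E src tgt v x)"
  by (simp add: flow_polytope_def net_inflow_def)

lemma flow_polytope_cong:
  "(\<And>v. v \<in> V \<Longrightarrow> \<theta> v = \<theta>' v) \<Longrightarrow> flow_polytope V E src tgt \<theta> = flow_polytope V E src tgt \<theta>'"
  unfolding flow_polytope_def by auto

lemma net_inflow_le_total:
  assumes "finite E" "\<forall>b\<in>E. 0 \<le> x b"
  shows "net_inflow E src tgt v x \<le> sum x E"
proof -
  have "(\<Sum>b\<in>{b\<in>E. tgt b = v}. x b) \<le> sum x E"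
    by (rule sum_mono2) (use assms in auto)
  moreover have "0 \<le> (\<Sum>b\<in>{b\<in>E. src b = v}. x b)"
    by (rule sum_nonneg) (use assms in auto)
  ultimately show ?thesis unfolding net_inflow_def by linarith
qed

lemma net_inflow_linear:
  "net_inflow E src tgt v (\<lambda>i. \<Sum>s\<in>S. u s * p s i) = (\<Sum>s\<in>S. u s * net_inflow E src tgt v (p s))"
  unfolding net_inflow_def
  by (simp add: sum.swap[of _ S] sum_distrib_left sum_subtractf right_diff_distrib)

lemma net_inflow_Ints:
  "(\<And>i. x i \<in> \<int>) \<Longrightarrow> net_inflow E src tgt v x \<in> \<int>"
  unfolding net_inflow_def by (intro Ints_diff Ints_sum) auto

lemma net_inflow_remove_zero:
  assumes "finite E" "x a = 0"
  shows "net_inflow (E - {a}) src tgt v x = net_inflow E src tgt v x"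
proof -
  have "{b\<in>E - {a}. P b} = {b\<in>E. P b} - {a}" for P by auto
  then show ?thesis using assms by (simp add: net_inflow_def sum_diff1)
qed

lemma sum_fun_upd:
  fixes f :: "'a \<Rightarrow> 'b::ab_group_add"
  assumes "finite A"
  shows "sum (f(a := c)) A = sum f A + (if a \<in> A then c - f a else 0)"
proof -
  have "sum (f(a := c)) A = (\<Sum>i\<in>A. f i + (if i = a then c - f i else 0))"
    by (rule sum.cong) auto
  then show ?thesis using assms by (simp add: sum.distrib)
qed

lemma sum_weighted_fibres:
  fixes f :: "'v \<Rightarrow> 'a::comm_semiring_1"
  assumes "finite V" "finite E" "T ` E \<subseteq> V"
  shows "(\<Sum>v\<in>V. f v * (\<Sum>b\<in>{b\<in>E. T b = v}. x b)) = (\<Sum>b\<in>E. f (T b) * x b)"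
proof -
  have "(\<Sum>v\<in>V. f v * (\<Sum>b\<in>{b\<in>E. T b = v}. x b)) = (\<Sum>v\<in>V. \<Sum>b\<in>{b\<in>E. T b = v}. f (T b) * x b)"
    by (simp add: sum_distrib_left)
  also have "\<dots> = (\<Sum>b\<in>E. f (T b) * x b)"
    by (rule sum.group[OF assms(2,1,3)])
  finally show ?thesis .
qed

lemma sum_weighted_net_inflow:
  fixes f :: "'v \<Rightarrow> real"
  assumes "quiver V E src tgt"
  shows "(\<Sum>v\<in>V. f v * net_inflow E src tgt v x) = (\<Sum>b\<in>E. (f (tgt b) - f (src b)) * x b)"
proof -
  have "src ` E \<subseteq> V" "tgt ` E \<subseteq> V" "finite V" "finite E"
    using assms by (auto simp: quiver_def)
  then show ?thesis
    by (simp add: net_inflow_def right_diff_distrib sum_subtractf left_diff_distrib sum_weighted_fibres)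
qed

lemma acyclic_quiver_potential:
  fixes src tgt :: "'e \<Rightarrow> 'v"
  assumes "quiver V E src tgt" "acyclic_quiver E src tgt"
  obtains pot :: "'v \<Rightarrow> nat" where "\<And>b. b \<in> E \<Longrightarrow> pot (src b) < pot (tgt b)"
proof -
  define R where "R = {(src b, tgt b) | b. b \<in> E}"
  have "R \<subseteq> V \<times> V" using assms(1) unfolding R_def quiver_def by blast
  then have "R\<^sup>+ \<subseteq> V \<times> V" by (rule trancl_subset_Sigma)
  then have fin: "finite {w. (w, v) \<in> R\<^sup>+}" for v
    using assms(1) unfolding quiver_def by (blast intro: finite_subset[of _ V])
  have "card {w. (w, src b) \<in> R\<^sup>+} < card {w. (w, tgt b) \<in> R\<^sup>+}" if "b \<in> E" for b
  proof -
    have edge: "(src b, tgt b) \<in> R" using that by (auto simp: R_def)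
    have "insert (src b) {w. (w, src b) \<in> R\<^sup>+} \<subseteq> {w. (w, tgt b) \<in> R\<^sup>+}" (is "?pred \<subseteq> _")
      using edge by (blast intro: trancl_into_trancl r_into_trancl)
    then have "card ?pred \<le> card {w. (w, tgt b) \<in> R\<^sup>+}"
      by (rule card_mono[OF fin])
    moreover have "src b \<notin> {w. (w, src b) \<in> R\<^sup>+}"
      using assms(2) unfolding acyclic_quiver_def R_def by blast
    ultimately show ?thesis
      using fin[of "src b"] by simp
  qed
  then show ?thesis
    by (rule that[of "\<lambda>v. card {w. (w, v) \<in> R\<^sup>+}"])
qed

lemma flow_polytope_total_flow_bounded:
  fixes src tgt :: "'e \<Rightarrow> 'v"
  assumes "quiver V E src tgt" "acyclic_quiver E src tgt"
  obtains C where "\<And>x. x \<in> flow_polytope V E src tgt \<theta> \<Longrightarrow> sum x E \<le> C"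
proof -
  obtain pot :: "'v \<Rightarrow> nat" where pot: "\<And>b. b \<in> E \<Longrightarrow> pot (src b) < pot (tgt b)"
    using acyclic_quiver_potential[OF assms] by blast
  have "sum x E \<le> (\<Sum>v\<in>V. real (pot v) * real_of_int (\<theta> v))" if x: "x \<in> flow_polytope V E src tgt \<theta>" for x
  proof -
    have "sum x E \<le> (\<Sum>b\<in>E. (real (pot (tgt b)) - real (pot (src b))) * x b)"
    proof (rule sum_mono)
      fix b assume "b \<in> E"
      moreover have "1 \<le> real (pot (tgt b)) - real (pot (src b))"
        using pot[OF \<open>b \<in> E\<close>] by linarith
      ultimately have "1 * x b \<le> (real (pot (tgt b)) - real (pot (src b))) * x b"
        using x by (intro mult_right_mono) (auto simp: flow_polytope_iff)
      then show "x b \<le> (real (pot (tgt b)) - real (pot (src b))) * x b" by simp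
    qed
    also have "\<dots> = (\<Sum>v\<in>V. real (pot v) * net_inflow E src tgt v x)"
      by (rule sum_weighted_net_inflow[OF assms(1), symmetric])
    also have "\<dots> = (\<Sum>v\<in>V. real (pot v) * real_of_int (\<theta> v))"
      using x by (auto simp: flow_polytope_iff)
    finally show ?thesis .
  qed
  then show ?thesis by (rule that)
qed

lemma acyclic_quiver_src_neq_tgt:
  "acyclic_quiver E src tgt \<Longrightarrow> a \<in> E \<Longrightarrow> src a \<noteq> tgt a"
  unfolding acyclic_quiver_def by fastforce

locale arrow_contraction =
  fixes V :: "'v set" and E :: "'e set" and src tgt :: "'e \<Rightarrow> 'v" and a :: 'e
  assumes quiver: "quiver V E src tgt" and arrow: "a \<in> E" and not_loop: "src a \<noteq> tgt a"
begin

abbreviation "V' \<equiv> contr_V V src tgt a"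
abbreviation "E' \<equiv> contr_E E a"
abbreviation "src' \<equiv> contr_src src tgt a"
abbreviation "tgt' \<equiv> contr_tgt src tgt a"

lemma finite_arrows: "finite E"
  using quiver by (simp add: quiver_def)

lemma arrow_ends: "src a \<in> V" "tgt a \<in> V"
  using quiver arrow by (auto simp: quiver_def)

lemma quiver_contracted: "quiver V' E' src' tgt'"
  using quiver arrow not_loop
  by (auto simp: quiver_def contr_V_def contr_E_def contr_src_def contr_tgt_def glue_def)

lemma sum_glued_fibre:
  fixes x :: "'e \<Rightarrow> real"
  assumes "v \<noteq> tgt a"
  shows "(\<Sum>b\<in>{b\<in>E. glue src tgt a (T b) = v}. x b) =
    (if v = src a then (\<Sum>b\<in>{b\<in>E. T b = src a}. x b) + (\<Sum>b\<in>{b\<in>E. T b = tgt a}. x b)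
     else (\<Sum>b\<in>{b\<in>E. T b = v}. x b))"
proof (cases "v = src a")
  case True
  then have "{b\<in>E. glue src tgt a (T b) = v} = {b\<in>E. T b = src a} \<union> {b\<in>E. T b = tgt a}"
    using assms by (auto simp: glue_def)
  then show ?thesis
    using True finite_arrows not_loop by (simp add: sum.union_disjoint disjoint_iff)
next
  case False
  then have "{b\<in>E. glue src tgt a (T b) = v} = {b\<in>E. T b = v}"
    using assms by (auto simp: glue_def)
  then show ?thesis using False by simp
qed

lemma net_inflow_contracted:
  fixes x :: "'e \<Rightarrow> real"
  assumes "v \<noteq> tgt a" "x a = 0"
  shows "net_inflow E' src' tgt' v x =
    (if v = src a then net_inflow E src tgt (src a) x + net_inflow E src tgt (tgt a) x
     else net_inflow E src tgt v x)"
proof -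
  have "net_inflow E' src' tgt' v x = net_inflow E (glue src tgt a \<circ> src) (glue src tgt a \<circ> tgt) v x"
    using net_inflow_remove_zero[where x=x, OF finite_arrows assms(2)]
    by (simp add: contr_E_def contr_src_def contr_tgt_def)
  then show ?thesis
    using sum_glued_fibre[OF assms(1), where T=src and x=x] sum_glued_fibre[OF assms(1), where T=tgt and x=x]
    by (simp add: net_inflow_def)
qed

lemma net_inflow_update_arrow:
  "net_inflow E src tgt v (x(a := c)) =
    net_inflow E src tgt v x + (if v = tgt a then c - x a else if v = src a then x a - c else 0)"
  using finite_arrows arrow not_loop by (auto simp: net_inflow_def sum_fun_upd simp del: fun_upd_apply)

lemma forget_arrow_mem_contracted:
  assumes x: "x \<in> flow_polytope V E src tgt \<psi>"
  shows "x(a := 0) \<in> flow_polytope V' E' src' tgt' (contr_weight src tgt a \<psi>)"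
proof -
  have cons: "real_of_int (\<psi> v) = net_inflow E src tgt v x" if "v \<in> V" for v
    using x that by (simp add: flow_polytope_iff)
  have "real_of_int (contr_weight src tgt a \<psi> v) = net_inflow E' src' tgt' v (x(a := 0))"
    if "v \<in> V" "v \<noteq> tgt a" for v
    using net_inflow_contracted[OF that(2), of "x(a := 0)"] net_inflow_update_arrow[of _ x 0]
      cons[OF that(1)] cons[OF arrow_ends(1)] cons[OF arrow_ends(2)] not_loop that(2)
    by (simp add: contr_weight_def)
  then show ?thesis
    using x by (auto simp: flow_polytope_iff contr_V_def contr_E_def)
qed

definition restore_arrow :: "('v \<Rightarrow> int) \<Rightarrow> ('e \<Rightarrow> real) \<Rightarrow> 'e \<Rightarrow> real" where
  "restore_arrow \<psi> y = y(a := real_of_int (\<psi> (tgt a)) - net_inflow (E - {a}) src tgt (tgt a) y)"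

lemma restore_arrow_mem:
  assumes y: "y \<in> flow_polytope V' E' src' tgt' (contr_weight src tgt a \<psi>)"
    and bound: "net_inflow (E - {a}) src tgt (tgt a) y \<le> \<psi> (tgt a)"
  shows "restore_arrow \<psi> y \<in> flow_polytope V E src tgt \<psi>"
proof -
  have ya: "y a = 0"
    using y by (simp add: flow_polytope_iff contr_E_def)
  have inflow: "net_inflow (E - {a}) src tgt w y = net_inflow E src tgt w y" for w
    by (rule net_inflow_remove_zero[where x=y, OF finite_arrows ya])
  have cons: "real_of_int (contr_weight src tgt a \<psi> v) = net_inflow E' src' tgt' v y"
    if "v \<in> V" "v \<noteq> tgt a" for v
    using y that by (simp add: flow_polytope_iff contr_V_def)
  have cons_src: "real_of_int (\<psi> (src a)) + real_of_int (\<psi> (tgt a)) =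
      net_inflow E src tgt (src a) y + net_inflow E src tgt (tgt a) y"
    using cons[OF arrow_ends(1) not_loop] net_inflow_contracted[where x=y, OF not_loop ya]
    by (simp add: contr_weight_def)
  have cons_other: "real_of_int (\<psi> v) = net_inflow E src tgt v y"
    if "v \<in> V" "v \<noteq> src a" "v \<noteq> tgt a" for v
    using cons[OF that(1,3)] net_inflow_contracted[where x=y, OF that(3) ya] that(2)
    by (simp add: contr_weight_def)
  have "real_of_int (\<psi> v) = net_inflow E src tgt v (restore_arrow \<psi> y)" if "v \<in> V" for v
    using that cons_src cons_other[of v] not_loop
    by (auto simp: restore_arrow_def net_inflow_update_arrow ya inflow)
  then show ?thesis
    using y bound arrow inflow
    by (auto simp: flow_polytope_iff contr_E_def restore_arrow_def)
qed

lemma restore_forget_arrow: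
  assumes "x \<in> flow_polytope V E src tgt \<psi>"
  shows "restore_arrow \<psi> (x(a := 0)) = x"
proof -
  have "net_inflow (E - {a}) src tgt (tgt a) (x(a := 0)) = net_inflow E src tgt (tgt a) (x(a := 0))"
    by (rule net_inflow_remove_zero[OF finite_arrows]) simp
  also have "\<dots> = net_inflow E src tgt (tgt a) x - x a"
    by (simp add: net_inflow_update_arrow)
  finally show ?thesis
    using assms arrow_ends by (auto simp: restore_arrow_def flow_polytope_iff)
qed

lemma forget_restore_arrow: "(restore_arrow \<psi> y)(a := 0) = y" if "y a = 0"
  using that by (auto simp: restore_arrow_def)

lemma flow_polytope_contracted_shift:
  "flow_polytope V' E' src' tgt'
     (contr_weight src tgt a (\<lambda>w. \<theta> w + d * (char_vec (tgt a) w - char_vec (src a) w))) =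
   flow_polytope V' E' src' tgt' (contr_weight src tgt a \<theta>)"
  using not_loop by (intro flow_polytope_cong) (auto simp: contr_V_def contr_weight_def char_vec_def)

lemma contractable_if_inflow_bounded:
  assumes "\<And>y. y \<in> flow_polytope V' E' src' tgt' (contr_weight src tgt a \<psi>) \<Longrightarrow>
      net_inflow (E - {a}) src tgt (tgt a) y \<le> \<psi> (tgt a)"
  shows "contractable V E src tgt \<psi> a"
  unfolding contractable_def
proof (rule int_aff_equivI[where \<phi>="\<lambda>x. x(a := 0)" and \<iota>="restore_arrow \<psi>"])
  show "preserves_affine_combinations (\<lambda>x. x(a := 0))"
    by (simp add: preserves_affine_combinations_def fun_eq_iff)
  show "preserves_affine_combinations (restore_arrow \<psi>)"
    by (auto simp: preserves_affine_combinations_def restore_arrow_def fun_eq_iff net_inflow_linear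
        right_diff_distrib sum_subtractf sum_distrib_right[symmetric])
  show "(\<lambda>x. x(a := 0)) ` flow_polytope V E src tgt \<psi> = flow_polytope V' E' src' tgt' (contr_weight src tgt a \<psi>)"
  proof
    show "(\<lambda>x. x(a := 0)) ` flow_polytope V E src tgt \<psi> \<subseteq> flow_polytope V' E' src' tgt' (contr_weight src tgt a \<psi>)"
      using forget_arrow_mem_contracted by blast
    show "flow_polytope V' E' src' tgt' (contr_weight src tgt a \<psi>) \<subseteq> (\<lambda>x. x(a := 0)) ` flow_polytope V E src tgt \<psi>"
    proof
      fix y assume y: "y \<in> flow_polytope V' E' src' tgt' (contr_weight src tgt a \<psi>)"
      then have "y a = 0" by (simp add: flow_polytope_iff contr_E_def)
      then show "y \<in> (\<lambda>x. x(a := 0)) ` flow_polytope V E src tgt \<psi>"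
        using restore_arrow_mem[OF y assms[OF y]] forget_restore_arrow by (metis image_eqI)
    qed
  qed
  show "restore_arrow \<psi> (x(a := 0)) = x" if "x \<in> flow_polytope V E src tgt \<psi>" for x
    using restore_forget_arrow[OF that] .
  show "(restore_arrow \<psi> y)(a := 0) = y" if "y \<in> flow_polytope V' E' src' tgt' (contr_weight src tgt a \<psi>)" for y
    using that by (intro forget_restore_arrow) (simp add: flow_polytope_iff contr_E_def)
  show "(x(a := 0)) j \<in> \<int>" if "\<And>i. x i \<in> \<int>" for x :: "'e \<Rightarrow> real" and j
    using that by simp
  show "restore_arrow \<psi> y j \<in> \<int>" if "\<And>i. y i \<in> \<int>" for y j
    using that net_inflow_Ints[OF that] by (auto simp: restore_arrow_def)
qed

end

theorem proposition4p21:
  fixes V :: "'v set" and E :: "'e set" and src tgt :: "'e \<Rightarrow> 'v"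
    and \<theta> :: "'v \<Rightarrow> int" and a :: 'e
  assumes "quiver V E src tgt"
    and "acyclic_quiver E src tgt"
    and "flow_polytope V E src tgt \<theta> \<noteq> {}"
    and "a \<in> E"
    and "acyclic_quiver (contr_E E a) (contr_src src tgt a) (contr_tgt src tgt a)"
  shows "\<exists>D::int. \<forall>d\<ge>D. contractable V E src tgt
           (\<lambda>v. \<theta> v + d * (char_vec (tgt a) v - char_vec (src a) v)) a"
proof -
  interpret arrow_contraction V E src tgt a
    using assms(1,4) acyclic_quiver_src_neq_tgt[OF assms(2,4)] by unfold_locales
  obtain C where C: "\<And>y. y \<in> flow_polytope V' E' src' tgt' (contr_weight src tgt a \<theta>) \<Longrightarrow> sum y E' \<le> C"
    using flow_polytope_total_flow_bounded[OF quiver_contracted assms(5)] by blast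
  have "contractable V E src tgt (\<lambda>v. \<theta> v + d * (char_vec (tgt a) v - char_vec (src a) v)) a"
    if d: "\<lceil>C\<rceil> - \<theta> (tgt a) \<le> d" for d
  proof (rule contractable_if_inflow_bounded)
    fix y
    assume "y \<in> flow_polytope V' E' src' tgt'
      (contr_weight src tgt a (\<lambda>v. \<theta> v + d * (char_vec (tgt a) v - char_vec (src a) v)))"
    then have y: "y \<in> flow_polytope V' E' src' tgt' (contr_weight src tgt a \<theta>)"
      by (simp only: flow_polytope_contracted_shift)
    have "net_inflow (E - {a}) src tgt (tgt a) y \<le> sum y E'"
      using y finite_arrows unfolding contr_E_def
      by (intro net_inflow_le_total) (auto simp: flow_polytope_iff)
    also have "\<dots> \<le> C" by (rule C[OF y])
    finally show "net_inflow (E - {a}) src tgt (tgt a) y \<le>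
        real_of_int (\<theta> (tgt a) + d * (char_vec (tgt a) (tgt a) - char_vec (src a) (tgt a)))"
      using d not_loop by (simp add: char_vec_def) linarith
  qed
  then show ?thesis by blast
qed

end
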